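(* Let $\triangle ABC$ be a nondegenerate triangle circumscribed about a central conic with semi-axes $a$ and $b$, $a$ being the semi-axis along the focal axis, one of whose foci coincides with the circumcenter of $\triangle ABC$. Let $H$ be the orthocenter of $\triangle ABC$. Then $|AH|\,|BH|\,|CH|=8ab^2$.
   Context: A central conic is a non-degenerate ellipse or hyperbola. For a hyperbola, $a$ is the semi-transverse axis and $b$ the semi-conjugate axis, so that $a^2+b^2=c^2$ with $c$ half the focal distance. A triangle is circumscribed about a conic if each of its three sidelines is tangent to the conic. *)

theory Defs
  imports "HOL-Analysis.Analysis"
begin

text \<open>A central conic in the Euclidean plane (real^2), given by its center Z,
  a unit vector u along the focal axis, the semi-axis a along the focal axis,
  the other semi-axis b, and a flag hyp (False = ellipse, True = hyperbola).
  Writing x = (P-Z).u and y = (P-Z).v for a unit vector v orthogonal to u,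
  we have y^2 = |P-Z|^2 - x^2, so the conic is
  x^2/a^2 + y^2/b^2 = 1 (ellipse) or x^2/a^2 - y^2/b^2 = 1 (hyperbola).\<close>

definition conic_eq :: "bool \<Rightarrow> real \<Rightarrow> real \<Rightarrow> real^2 \<Rightarrow> real^2 \<Rightarrow> real^2 \<Rightarrow> real" where
  "conic_eq hyp a b Z u P =
     ((P - Z) \<bullet> u)\<^sup>2 / a\<^sup>2
     + (if hyp then -1 else 1) * ((norm (P - Z))\<^sup>2 - ((P - Z) \<bullet> u)\<^sup>2) / b\<^sup>2 - 1"

definition central_conic :: "bool \<Rightarrow> real \<Rightarrow> real \<Rightarrow> real^2 \<Rightarrow> real^2 \<Rightarrow> bool" where
  "central_conic hyp a b Z u \<longleftrightarrow> a > 0 \<and> b > 0 \<and> norm u = 1 \<and> (\<not> hyp \<longrightarrow> b \<le> a)"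

definition focal_c :: "bool \<Rightarrow> real \<Rightarrow> real \<Rightarrow> real" where
  "focal_c hyp a b = sqrt (if hyp then a\<^sup>2 + b\<^sup>2 else a\<^sup>2 - b\<^sup>2)"

definition conic_foci :: "bool \<Rightarrow> real \<Rightarrow> real \<Rightarrow> real^2 \<Rightarrow> real^2 \<Rightarrow> (real^2) set" where
  "conic_foci hyp a b Z u = {Z + focal_c hyp a b *\<^sub>R u, Z - focal_c hyp a b *\<^sub>R u}"

definition tangent_line :: "bool \<Rightarrow> real \<Rightarrow> real \<Rightarrow> real^2 \<Rightarrow> real^2 \<Rightarrow> real^2 \<Rightarrow> real^2 \<Rightarrow> bool" where
  "tangent_line hyp a b Z u X Y \<longleftrightarrow> X \<noteq> Y \<and>
     (\<exists>P D. P \<in> {X + t *\<^sub>R (Y - X) | t. True} \<and> conic_eq hyp a b Z u P = 0 \<and>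
        (conic_eq hyp a b Z u has_derivative D) (at P) \<and> D (Y - X) = 0)"

definition circumscribed :: "bool \<Rightarrow> real \<Rightarrow> real \<Rightarrow> real^2 \<Rightarrow> real^2 \<Rightarrow> real^2 \<Rightarrow> real^2 \<Rightarrow> real^2 \<Rightarrow> bool" where
  "circumscribed hyp a b Z u A B C \<longleftrightarrow>
     tangent_line hyp a b Z u A B \<and> tangent_line hyp a b Z u B C \<and> tangent_line hyp a b Z u C A"

definition is_circumcenter :: "real^2 \<Rightarrow> real^2 \<Rightarrow> real^2 \<Rightarrow> real^2 \<Rightarrow> bool" where
  "is_circumcenter O' A B C \<longleftrightarrow> dist O' A = dist O' B \<and> dist O' B = dist O' C"

definition is_orthocenter :: "real^2 \<Rightarrow> real^2 \<Rightarrow> real^2 \<Rightarrow> real^2 \<Rightarrow> bool" where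
  "is_orthocenter H A B C \<longleftrightarrow>
     (H - A) \<bullet> (B - C) = 0 \<and> (H - B) \<bullet> (C - A) = 0 \<and> (H - C) \<bullet> (A - B) = 0"

end

theory Submission
  imports Defs
begin

text \<open>
  For a tangent line of the conic, the foot M of the perpendicular from a focus F lies on the
  auxiliary circle of radius a about the centre Z, and (F - M) \<bullet> (F' - M) = \<plusminus>b^2 for the
  second focus F' = 2 Z - F. When F is the circumcentre, these feet are the side midpoints, so
  Z is the nine-point centre, a = R/2 for the circumradius R, and F' is the orthocentre
  H = A + B + C - 2 F. Writing x, y, z for the vertices seen from F, we have
  |AH| = |y + z| etc., and the vanishing Gram determinant of three plane vectors gives
  |AH| |BH| |CH| = 2 R \<bar>R^2 + x \<bullet> y + y \<bullet> z + z \<bullet> x\<bar> = 4 R \<bar>(F - M) \<bullet> (H - M)\<bar> = 8 a b^2.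
\<close>

section \<open>Vectors in the plane\<close>

lemma inner_real2: "(x::real^2) \<bullet> y = x$1 * y$1 + x$2 * y$2"
  by (simp add: inner_vec_def sum_2)

lemma orthogonal_real2_imp_parallel:
  fixes d v w :: "real^2"
  assumes "d \<noteq> 0" "v \<bullet> d = 0" "w \<bullet> d = 0" "v \<noteq> 0"
  shows "w = ((w \<bullet> v) / (v \<bullet> v)) *\<^sub>R v"
proof -
  have d: "d$1 \<noteq> 0 \<or> d$2 \<noteq> 0"
    using assms(1) by (metis exhaust_2 vec_eq_iff zero_index)
  have "d$1 * (v$1 * w$2 - v$2 * w$1) = 0" "d$2 * (v$1 * w$2 - v$2 * w$1) = 0"
    using assms(2,3) unfolding inner_real2 by algebra+
  then have det: "v$1 * w$2 = v$2 * w$1"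
    using d by auto
  have "v \<bullet> v \<noteq> 0" using assms(4) by simp
  with det show ?thesis
    unfolding vec_eq_iff forall_2 inner_real2 by (auto simp: field_simps)
qed

lemma noncollinear_orthogonal_sides_eq_0:
  fixes A B C w :: "real^2"
  assumes "\<not> collinear {A, B, C}" "w \<bullet> (B - A) = 0" "w \<bullet> (C - A) = 0"
  shows "w = 0"
proof (rule ccontr)
  assume "w \<noteq> 0"
  moreover have "B - A \<noteq> 0" using assms(1) by auto
  ultimately have "C - A = ((C - A) \<bullet> (B - A) / ((B - A) \<bullet> (B - A))) *\<^sub>R (B - A)"
    using assms(2,3) by (intro orthogonal_real2_imp_parallel) (simp_all add: inner_commute)
  then have "collinear {B, A, C}"
    by (metis collinear_lemma collinear_3 NO_MATCH_def)
  with assms(1) show False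
    by (simp add: insert_commute)
qed

lemma gram_det_real2:
  fixes x y z :: "real^2"
  shows "(x \<bullet> x) * (y \<bullet> y) * (z \<bullet> z) + 2 * (x \<bullet> y) * (y \<bullet> z) * (z \<bullet> x)
    - (x \<bullet> x) * (y \<bullet> z)\<^sup>2 - (y \<bullet> y) * (z \<bullet> x)\<^sup>2 - (z \<bullet> z) * (x \<bullet> y)\<^sup>2 = 0"
  unfolding inner_real2 by (simp add: algebra_simps power2_eq_square)

lemma norm_pairwise_sums_product:
  fixes x y z :: "real^2"
  assumes "norm x = r" "norm y = r" "norm z = r"
  shows "norm (y + z) * norm (z + x) * norm (x + y) = 2 * r * \<bar>r\<^sup>2 + x \<bullet> y + y \<bullet> z + z \<bullet> x\<bar>"
proof -
  have sq: "x \<bullet> x = r\<^sup>2" "y \<bullet> y = r\<^sup>2" "z \<bullet> z = r\<^sup>2"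
    using assms by (simp_all flip: power2_norm_eq_inner)
  have sum_sq: "(norm (v + w))\<^sup>2 = 2 * (r\<^sup>2 + v \<bullet> w)" if "v \<bullet> v = r\<^sup>2" "w \<bullet> w = r\<^sup>2" for v w :: "real^2"
    using that by (simp add: power2_norm_eq_inner algebra_simps inner_commute)
  have identity: "2 * (r\<^sup>2 + p) * (2 * (r\<^sup>2 + q)) * (2 * (r\<^sup>2 + s)) - (2 * r * (r\<^sup>2 + s + p + q))\<^sup>2
      = 4 * (r\<^sup>2 * r\<^sup>2 * r\<^sup>2 + 2 * s * p * q - r\<^sup>2 * p\<^sup>2 - r\<^sup>2 * q\<^sup>2 - r\<^sup>2 * s\<^sup>2)" for p q s :: real
    by (simp add: algebra_simps power2_eq_square)
  have "(norm (y + z) * norm (z + x) * norm (x + y))\<^sup>2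
      = 2 * (r\<^sup>2 + y \<bullet> z) * (2 * (r\<^sup>2 + z \<bullet> x)) * (2 * (r\<^sup>2 + x \<bullet> y))"
    unfolding power_mult_distrib sum_sq[OF sq(2,3)] sum_sq[OF sq(3,1)] sum_sq[OF sq(1,2)] ..
  also have "\<dots> = (2 * r * (r\<^sup>2 + x \<bullet> y + y \<bullet> z + z \<bullet> x))\<^sup>2"
  proof -
    have "r\<^sup>2 * r\<^sup>2 * r\<^sup>2 + 2 * (x \<bullet> y) * (y \<bullet> z) * (z \<bullet> x)
        - r\<^sup>2 * (y \<bullet> z)\<^sup>2 - r\<^sup>2 * (z \<bullet> x)\<^sup>2 - r\<^sup>2 * (x \<bullet> y)\<^sup>2 = 0"
      using gram_det_real2[of x y z] unfolding sq .
    with identity[of "y \<bullet> z" "z \<bullet> x" "x \<bullet> y"] show ?thesis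
      by simp
  qed
  also have "\<dots> = (2 * r * \<bar>r\<^sup>2 + x \<bullet> y + y \<bullet> z + z \<bullet> x\<bar>)\<^sup>2"
    by (simp add: power_mult_distrib)
  finally show ?thesis
    using assms(1) by (auto intro: power2_eq_imp_eq)
qed

lemma midpoint_diff: "midpoint X Y - P = (1/2) *\<^sub>R ((X - P) + (Y - P))"
  unfolding midpoint_def by (simp add: algebra_simps flip: scaleR_add_right)

lemma midpoint_dist_eq_orthogonal:
  fixes F X Y :: "'a::real_inner"
  assumes "dist F X = dist F Y"
  shows "(midpoint X Y - F) \<bullet> (Y - X) = 0"
proof -
  define v w where "v = X - F" and "w = Y - F"
  have "v \<bullet> v = w \<bullet> w"
    using assms by (simp add: v_def w_def dist_norm norm_minus_commute flip: power2_norm_eq_inner)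
  moreover have "Y - X = w - v"
    by (simp add: v_def w_def)
  moreover have "(v + w) \<bullet> (w - v) = w \<bullet> w - v \<bullet> v"
    unfolding inner_add_left inner_diff_right inner_commute[of v w] by simp
  ultimately show ?thesis
    unfolding midpoint_diff v_def[symmetric] w_def[symmetric] by simp
qed

lemma collinear_midpoints_iff:
  "collinear {midpoint B C, midpoint C A, midpoint A B} \<longleftrightarrow> collinear {A, B, C}"
proof -
  note collinear_3' = collinear_3[unfolded NO_MATCH_def, simplified]
  have sides: "midpoint C A - midpoint B C = (- 1/2) *\<^sub>R (B - A)"
    "midpoint A B - midpoint B C = (- 1/2) *\<^sub>R (C - A)"
    by (simp_all add: midpoint_def algebra_simps)
  have "collinear {midpoint C A, midpoint B C, midpoint A B}
      \<longleftrightarrow> collinear {0, (- 1/2) *\<^sub>R (B - A), (- 1/2) *\<^sub>R (C - A)}"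
    unfolding collinear_3'[of "midpoint C A"] sides ..
  also have "\<dots> \<longleftrightarrow> collinear {0, B - A, C - A}"
    by (subst collinear_scaleR_iff) simp
  also have "\<dots> \<longleftrightarrow> collinear {B, A, C}"
    by (rule collinear_3'[symmetric])
  finally show ?thesis
    by (simp add: insert_commute)
qed

section \<open>Circumcentre, orthocentre and nine-point centre\<close>

lemma circumcenter_unique:
  assumes "\<not> collinear {A, B, C}" "is_circumcenter P A B C" "is_circumcenter Q A B C"
  shows "P = Q"
proof -
  have "(P - Q) \<bullet> (Y - X) = 0" if "dist P X = dist P Y" "dist Q X = dist Q Y" for X Y
  proof -
    have "(P - X) \<bullet> (P - X) = (P - Y) \<bullet> (P - Y)" "(Q - X) \<bullet> (Q - X) = (Q - Y) \<bullet> (Q - Y)"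
      using that by (simp_all add: dist_norm flip: power2_norm_eq_inner)
    then show ?thesis
      by (simp add: algebra_simps inner_commute)
  qed
  then have "P - Q = 0"
    using assms by (intro noncollinear_orthogonal_sides_eq_0[OF assms(1)]) (auto simp: is_circumcenter_def)
  then show ?thesis by simp
qed

lemma is_orthocenter_circumcenter:
  assumes "is_circumcenter O' A B C"
  shows "is_orthocenter (A + B + C - 2 *\<^sub>R O') A B C"
proof -
  have sq_radius: "(P - O') \<bullet> (P - O') = (Q - O') \<bullet> (Q - O')" if "dist O' P = dist O' Q" for P Q
    using that by (simp add: dist_norm norm_minus_commute flip: power2_norm_eq_inner)
  have radii: "(A - O') \<bullet> (A - O') = (B - O') \<bullet> (B - O')" "(B - O') \<bullet> (B - O') = (C - O') \<bullet> (C - O')"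
    using assms sq_radius unfolding is_circumcenter_def by blast+
  have diff_squares: "(v + w) \<bullet> (v - w) = v \<bullet> v - w \<bullet> w" for v w :: "real^2"
    unfolding inner_add_left inner_diff_right inner_commute[of w v] by simp
  have offsets: "A + B + C - 2 *\<^sub>R O' - A = (B - O') + (C - O')" "B - C = (B - O') - (C - O')"
    "A + B + C - 2 *\<^sub>R O' - B = (C - O') + (A - O')" "C - A = (C - O') - (A - O')"
    "A + B + C - 2 *\<^sub>R O' - C = (A - O') + (B - O')" "A - B = (A - O') - (B - O')"
    by (simp_all add: algebra_simps scaleR_2)
  show ?thesis
    unfolding is_orthocenter_def offsets diff_squares radii by simp
qed

lemma orthocenter_unique:
  assumes "\<not> collinear {A, B, C}" "is_orthocenter H A B C" "is_orthocenter H' A B C"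
  shows "H = H'"
proof -
  have "(H - H') \<bullet> (Y - X) = 0" if "(H - P) \<bullet> (Y - X) = 0" "(H' - P) \<bullet> (Y - X) = 0" for P X Y
  proof -
    have "(H - H') \<bullet> (Y - X) = (H - P) \<bullet> (Y - X) - (H' - P) \<bullet> (Y - X)"
      by (simp add: inner_diff_left)
    with that show ?thesis by simp
  qed
  then have CB: "(H - H') \<bullet> (B - C) = 0" and CA: "(H - H') \<bullet> (C - A) = 0"
    using assms(2,3) unfolding is_orthocenter_def by blast+
  have "(H - H') \<bullet> (B - A) = (H - H') \<bullet> (B - C) + (H - H') \<bullet> (C - A)"
    by (simp add: inner_diff_right)
  with CB CA have "(H - H') \<bullet> (B - A) = 0"
    by simp
  then have "H - H' = 0"
    using CA by (rule noncollinear_orthogonal_sides_eq_0[OF assms(1)])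
  then show ?thesis by simp
qed

lemma dist_midpoint_nine_point_center:
  fixes A B C P :: "'a::real_normed_vector"
  shows "dist ((1/2) *\<^sub>R (A + B + C - P)) (midpoint B C) = dist A P / 2"
proof -
  have "dist ((1/2) *\<^sub>R (A + B + C - P)) (midpoint B C) = norm ((1/2) *\<^sub>R (A + B + C - P) - midpoint B C)"
    by (rule dist_norm)
  also have "(1/2) *\<^sub>R (A + B + C - P) - midpoint B C = (1/2) *\<^sub>R (A - P)"
    unfolding midpoint_def by (simp add: algebra_simps)
  finally show ?thesis
    by (simp add: dist_norm)
qed

lemma equidistant_midpoints_nine_point_center:
  fixes A B C O' Z :: "real^2"
  assumes "\<not> collinear {A, B, C}" "is_circumcenter O' A B C"
    and "dist Z (midpoint B C) = \<rho>" "dist Z (midpoint C A) = \<rho>" "dist Z (midpoint A B) = \<rho>"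
  shows "2 *\<^sub>R Z = A + B + C - O'" and "\<rho> = dist O' A / 2"
proof -
  define N where "N = (1/2) *\<^sub>R (A + B + C - O')"
  have "dist N (midpoint B C) = dist A O' / 2" "dist N (midpoint C A) = dist B O' / 2"
    "dist N (midpoint A B) = dist C O' / 2"
    using dist_midpoint_nine_point_center[of A B C O'] dist_midpoint_nine_point_center[of B C A O']
      dist_midpoint_nine_point_center[of C A B O']
    by (simp_all add: N_def add_ac)
  then have "is_circumcenter N (midpoint B C) (midpoint C A) (midpoint A B)"
    using assms(2) by (simp add: is_circumcenter_def dist_commute)
  moreover have "is_circumcenter Z (midpoint B C) (midpoint C A) (midpoint A B)"
    using assms(3-5) by (simp add: is_circumcenter_def)
  moreover have "\<not> collinear {midpoint B C, midpoint C A, midpoint A B}"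
    using assms(1) by (simp add: collinear_midpoints_iff)
  ultimately have "Z = N"
    using circumcenter_unique by blast
  then show "2 *\<^sub>R Z = A + B + C - O'" and "\<rho> = dist O' A / 2"
    using assms(3) dist_midpoint_nine_point_center[of A B C O'] by (simp_all add: N_def dist_commute)
qed

lemma orthocenter_dists_product:
  fixes A B C O' :: "real^2"
  assumes "is_circumcenter O' A B C"
  defines "H \<equiv> A + B + C - 2 *\<^sub>R O'" and "M \<equiv> midpoint B C"
  shows "dist A H * dist B H * dist C H = 4 * dist O' A * \<bar>(O' - M) \<bullet> (H - M)\<bar>"
proof -
  define x y z where "x = A - O'" and "y = B - O'" and "z = C - O'"
  define r where "r = dist O' A"
  have radii: "norm x = r" "norm y = r" "norm z = r"
    using assms(1) by (simp_all add: is_circumcenter_def x_def y_def z_def r_def dist_norm norm_minus_commute)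
  have "H - A = y + z" "H - B = z + x" "H - C = x + y"
    by (simp_all add: H_def x_def y_def z_def vec_eq_iff)
  then have "dist A H = norm (y + z)" "dist B H = norm (z + x)" "dist C H = norm (x + y)"
    by (metis dist_commute dist_norm)+
  then have product: "dist A H * dist B H * dist C H = 2 * r * \<bar>r\<^sup>2 + x \<bullet> y + y \<bullet> z + z \<bullet> x\<bar>"
    using norm_pairwise_sums_product[OF radii] by simp
  have inner: "(O' - M) \<bullet> (H - M) = - (r\<^sup>2 + x \<bullet> y + y \<bullet> z + z \<bullet> x) / 2"
  proof -
    have OM: "O' - M = (- 1/2) *\<^sub>R (y + z)" and HM: "H - M = x + (1/2) *\<^sub>R (y + z)"
      by (simp_all add: H_def M_def midpoint_def x_def y_def z_def vec_eq_iff field_simps)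
    have "y \<bullet> y = r\<^sup>2" "z \<bullet> z = r\<^sup>2"
      using radii by (simp_all flip: power2_norm_eq_inner)
    then have "(y + z) \<bullet> (y + z) = 2 * r\<^sup>2 + 2 * (y \<bullet> z)"
      unfolding inner_add_left inner_add_right inner_commute[of z y] by simp
    then show ?thesis
      unfolding OM HM inner_scaleR_left inner_add_right inner_scaleR_right
      by (simp add: inner_add_left inner_commute algebra_simps)
  qed
  show ?thesis
    unfolding product inner r_def[symmetric] abs_divide abs_minus_cancel by simp
qed

section \<open>Focal properties of tangent lines\<close>

lemma conic_eq_inner:
  "conic_eq hyp a b Z u Q = ((Q - Z) \<bullet> u)\<^sup>2 / a\<^sup>2
     + (if hyp then -1 else 1) * ((Q - Z) \<bullet> (Q - Z) - ((Q - Z) \<bullet> u)\<^sup>2) / b\<^sup>2 - 1"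
  by (simp add: conic_eq_def power2_norm_eq_inner)

text \<open>Half the gradient of conic_eq at P: for P on the conic, the tangent at P is the line
  n \<bullet> (Q - Z) = 1 with n = conic_polar_vector hyp a b Z u P.\<close>

definition conic_polar_vector :: "bool \<Rightarrow> real \<Rightarrow> real \<Rightarrow> real^2 \<Rightarrow> real^2 \<Rightarrow> real^2 \<Rightarrow> real^2" where
  "conic_polar_vector hyp a b Z u P =
     (((P - Z) \<bullet> u) / a\<^sup>2) *\<^sub>R u
     + ((if hyp then -1 else 1) / b\<^sup>2) *\<^sub>R ((P - Z) - ((P - Z) \<bullet> u) *\<^sub>R u)"

lemma conic_eq_has_derivative:
  "(conic_eq hyp a b Z u has_derivative (\<lambda>h. 2 * (conic_polar_vector hyp a b Z u P \<bullet> h))) (at P)"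
proof -
  define q :: real where "q = (if hyp then -1 else 1)"
  have expanded: "conic_eq hyp a b Z u = (\<lambda>Q. ((Q - Z) \<bullet> u) * ((Q - Z) \<bullet> u) * (1 / a\<^sup>2)
      + q * ((Q - Z) \<bullet> (Q - Z) - ((Q - Z) \<bullet> u) * ((Q - Z) \<bullet> u)) * (1 / b\<^sup>2) - 1)"
    by (simp add: fun_eq_iff conic_eq_inner q_def power2_eq_square)
  show ?thesis
    unfolding expanded conic_polar_vector_def q_def[symmetric]
    by (rule has_derivative_eq_rhs, (rule derivative_intros)+)
      (auto simp: fun_eq_iff algebra_simps inner_commute diff_divide_distrib add_divide_distrib)
qed

lemma conic_polar_vector_inner_offset:
  "conic_polar_vector hyp a b Z u P \<bullet> (P - Z) = conic_eq hyp a b Z u P + 1"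
  unfolding conic_polar_vector_def conic_eq_inner
  by (simp add: inner_diff_left inner_commute power2_eq_square
      diff_divide_distrib add_divide_distrib algebra_simps)

lemma conic_polar_vector_dual:
  fixes Z u P :: "real^2" and hyp :: bool
  assumes "a \<noteq> 0" "b \<noteq> 0" "u \<bullet> u = 1"
  defines "n \<equiv> conic_polar_vector hyp a b Z u P"
  shows "a\<^sup>2 * (n \<bullet> u)\<^sup>2 + (if hyp then -1 else 1) * b\<^sup>2 * (n \<bullet> n - (n \<bullet> u)\<^sup>2)
    = conic_eq hyp a b Z u P + 1"
proof -
  define q :: real where "q = (if hyp then -1 else 1)"
  define x where "x = (P - Z) \<bullet> u"
  define w where "w = (P - Z) - x *\<^sub>R u"
  have wu: "w \<bullet> u = 0"
    using assms(3) by (simp add: w_def x_def inner_diff_left)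
  have n: "n = (x / a\<^sup>2) *\<^sub>R u + (q / b\<^sup>2) *\<^sub>R w"
    by (simp add: n_def conic_polar_vector_def q_def x_def w_def)
  have nu: "n \<bullet> u = x / a\<^sup>2"
    unfolding n using wu assms(3) by (simp add: inner_add_left)
  have nn: "n \<bullet> n = (x / a\<^sup>2)\<^sup>2 + (w \<bullet> w) / (b\<^sup>2)\<^sup>2"
    unfolding n using wu assms(3)
    by (simp add: inner_add_left inner_add_right inner_commute q_def power2_eq_square)
  have ww: "w \<bullet> w = (P - Z) \<bullet> (P - Z) - x\<^sup>2"
    unfolding w_def using assms(3)
    by (simp add: inner_diff_left inner_diff_right inner_commute x_def power2_eq_square)
  show ?thesis
    unfolding nn nu ww q_def[symmetric] using assms(1,2)
    by (simp add: conic_eq_inner q_def x_def power2_eq_square field_simps)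
qed

lemma tangent_line_polar:
  assumes "central_conic hyp a b Z u" "tangent_line hyp a b Z u X Y"
  obtains n where "n \<bullet> (X - Z) = 1" "n \<bullet> (Y - X) = 0"
    "a\<^sup>2 * (n \<bullet> u)\<^sup>2 + (if hyp then -1 else 1) * b\<^sup>2 * (n \<bullet> n - (n \<bullet> u)\<^sup>2) = 1"
proof -
  obtain P D t where P: "P = X + t *\<^sub>R (Y - X)" "conic_eq hyp a b Z u P = 0"
    and D: "(conic_eq hyp a b Z u has_derivative D) (at P)" "D (Y - X) = 0"
    using assms(2) unfolding tangent_line_def by blast
  define n where "n = conic_polar_vector hyp a b Z u P"
  have "D = (\<lambda>h. 2 * (n \<bullet> h))"
    unfolding n_def using D(1) conic_eq_has_derivative by (rule has_derivative_unique)
  then have direction: "n \<bullet> (Y - X) = 0"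
    using D(2) by simp
  have "n \<bullet> (P - Z) = 1"
    using conic_polar_vector_inner_offset P(2) by (simp add: n_def)
  then have offset: "n \<bullet> (X - Z) = 1"
    using direction unfolding P(1) by (simp add: algebra_simps inner_diff_right inner_add_right)
  have "a\<^sup>2 * (n \<bullet> u)\<^sup>2 + (if hyp then -1 else 1) * b\<^sup>2 * (n \<bullet> n - (n \<bullet> u)\<^sup>2) = 1"
    using conic_polar_vector_dual[of a b u hyp Z P] assms(1) P(2)
    by (simp add: n_def central_conic_def norm_eq_1)
  with offset direction show thesis
    by (rule that)
qed

lemma conic_focus_offset:
  assumes "central_conic hyp a b Z u" "F \<in> conic_foci hyp a b Z u"
  obtains s where "F - Z = s *\<^sub>R u" "s\<^sup>2 = a\<^sup>2 - (if hyp then -1 else 1) * b\<^sup>2"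
proof -
  have "b\<^sup>2 \<le> a\<^sup>2" if "\<not> hyp"
    using assms(1) that by (simp add: central_conic_def power_mono)
  then have c: "(focal_c hyp a b)\<^sup>2 = a\<^sup>2 - (if hyp then -1 else 1) * b\<^sup>2"
    by (simp add: focal_c_def add_nonneg_nonneg)
  consider "F - Z = focal_c hyp a b *\<^sub>R u" | "F - Z = (- focal_c hyp a b) *\<^sub>R u"
    using assms(2) by (auto simp: conic_foci_def)
  then show thesis
  proof cases
    case 1
    then show thesis using that c by blast
  next
    case 2
    then show thesis using that[of "- focal_c hyp a b"] c by simp
  qed
qed

text \<open>The hypotheses say that the line n \<bullet> (Q - Z) = 1 is tangent to the conic with centre Z,
  semi-axis a along u and k = \<plusminus>b^2, that F is a focus, and that M is the foot of the
  perpendicular from F to the line; 2 Z - F is the other focus.\<close>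

lemma focal_foot_on_tangent:
  fixes u n Z F M :: "'a::real_inner"
  assumes u: "u \<bullet> u = 1"
    and dual: "a\<^sup>2 * (n \<bullet> u)\<^sup>2 + k * (n \<bullet> n - (n \<bullet> u)\<^sup>2) = 1"
    and focus: "F - Z = s *\<^sub>R u" "s\<^sup>2 = a\<^sup>2 - k"
    and on_line: "n \<bullet> (M - Z) = 1"
    and foot: "M - F = t *\<^sub>R n"
  shows "(M - Z) \<bullet> (M - Z) = a\<^sup>2"
    and "(F - M) \<bullet> (2 *\<^sub>R Z - F - M) = k"
proof -
  define nn where "nn = n \<bullet> n"
  define nu where "nu = n \<bullet> u"
  have MZ: "M - Z = s *\<^sub>R u + t *\<^sub>R n"
    using focus(1) foot by (metis add.commute diff_add_cancel add_diff_eq)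
  have t_nn: "t * nn = 1 - s * nu"
    using on_line unfolding MZ nn_def nu_def by (simp add: inner_add_right inner_commute)
  have dual': "s\<^sup>2 * nu\<^sup>2 + k * nn = 1"
    using dual unfolding focus(2) nn_def nu_def by (simp add: algebra_simps)
  have "nn \<noteq> 0"
    using on_line unfolding nn_def by auto
  have "nn * ((M - Z) \<bullet> (M - Z)) = nn * (s\<^sup>2 + 2 * s * nu * t + t\<^sup>2 * nn)"
    unfolding MZ nn_def nu_def using u
    by (simp add: inner_add_left inner_add_right inner_commute power2_eq_square algebra_simps)
  also have "\<dots> = nn * s\<^sup>2 + 2 * s * nu * (t * nn) + (t * nn)\<^sup>2"
    by (simp add: power2_eq_square algebra_simps)
  also have "\<dots> = nn * (s\<^sup>2 + k)"
    unfolding t_nn using dual' by (simp add: power2_eq_square algebra_simps)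
  finally show "(M - Z) \<bullet> (M - Z) = a\<^sup>2"
    using \<open>nn \<noteq> 0\<close> focus(2) by simp
  have other_focus: "2 *\<^sub>R Z - F - M = - (2 * s) *\<^sub>R u - t *\<^sub>R n"
    using MZ focus(1) by (simp add: algebra_simps scaleR_2 flip: scaleR_add_left)
  have FM: "F - M = - t *\<^sub>R n"
    using foot by (simp add: algebra_simps)
  have "nn * ((F - M) \<bullet> (2 *\<^sub>R Z - F - M)) = 2 * s * nu * (t * nn) + (t * nn)\<^sup>2"
    unfolding other_focus FM nn_def nu_def by (simp add: inner_diff_right inner_commute power2_eq_square algebra_simps)
  also have "\<dots> = nn * k"
    unfolding t_nn using dual' by (simp add: power2_eq_square algebra_simps)
  finally show "(F - M) \<bullet> (2 *\<^sub>R Z - F - M) = k"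
    using \<open>nn \<noteq> 0\<close> by simp
qed

lemma tangent_side_midpoint_focal:
  fixes X Y F :: "real^2"
  assumes conic: "central_conic hyp a b Z u" and tangent: "tangent_line hyp a b Z u X Y"
    and focus: "F - Z = s *\<^sub>R u" "s\<^sup>2 = a\<^sup>2 - (if hyp then -1 else 1) * b\<^sup>2"
    and equidistant: "dist F X = dist F Y"
  shows "dist Z (midpoint X Y) = a"
    and "(F - midpoint X Y) \<bullet> (2 *\<^sub>R Z - F - midpoint X Y) = (if hyp then -1 else 1) * b\<^sup>2"
proof -
  obtain n where n: "n \<bullet> (X - Z) = 1" "n \<bullet> (Y - X) = 0"
    and dual: "a\<^sup>2 * (n \<bullet> u)\<^sup>2 + (if hyp then -1 else 1) * b\<^sup>2 * (n \<bullet> n - (n \<bullet> u)\<^sup>2) = 1"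
    using tangent_line_polar[OF conic tangent] .
  define M where "M = midpoint X Y"
  have "n \<bullet> (Y - Z) = n \<bullet> (Y - X) + n \<bullet> (X - Z)"
    by (simp add: inner_diff_right)
  moreover have "n \<bullet> (M - Z) = (1/2) * (n \<bullet> (X - Z) + n \<bullet> (Y - Z))"
    unfolding M_def midpoint_diff by (simp only: inner_scaleR_right inner_add_right)
  ultimately have on_line: "n \<bullet> (M - Z) = 1"
    using n by simp
  have "X \<noteq> Y" "n \<noteq> 0"
    using tangent n(1) by (auto simp: tangent_line_def)
  then have "M - F = ((M - F) \<bullet> n / (n \<bullet> n)) *\<^sub>R n"
    using n(2) midpoint_dist_eq_orthogonal[OF equidistant]
    by (intro orthogonal_real2_imp_parallel[of "Y - X"]) (simp_all add: M_def inner_commute)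
  from focal_foot_on_tangent[OF _ dual focus on_line this] conic
  have "(M - Z) \<bullet> (M - Z) = a\<^sup>2"
    and "(F - M) \<bullet> (2 *\<^sub>R Z - F - M) = (if hyp then -1 else 1) * b\<^sup>2"
    by (simp_all add: central_conic_def norm_eq_1)
  moreover have "dist Z M = sqrt ((M - Z) \<bullet> (M - Z))"
    by (simp add: dist_commute dist_norm norm_eq_sqrt_inner)
  ultimately show "dist Z (midpoint X Y) = a"
    and "(F - midpoint X Y) \<bullet> (2 *\<^sub>R Z - F - midpoint X Y) = (if hyp then -1 else 1) * b\<^sup>2"
    using conic by (simp_all add: M_def central_conic_def)
qed

theorem corollary5p13:
  fixes A B C Z u F H :: "real^2" and a b :: real and hyp :: bool
  assumes "\<not> collinear {A, B, C}"
    and "central_conic hyp a b Z u"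
    and "circumscribed hyp a b Z u A B C"
    and "F \<in> conic_foci hyp a b Z u"
    and "is_circumcenter F A B C"
    and "is_orthocenter H A B C"
  shows "dist A H * dist B H * dist C H = 8 * a * b\<^sup>2"
proof -
  obtain s where focus: "F - Z = s *\<^sub>R u" "s\<^sup>2 = a\<^sup>2 - (if hyp then -1 else 1) * b\<^sup>2"
    using conic_focus_offset[OF assms(2,4)] .
  have tangents: "tangent_line hyp a b Z u B C" "tangent_line hyp a b Z u C A"
    "tangent_line hyp a b Z u A B"
    using assms(3) by (auto simp: circumscribed_def)
  have equidistant: "dist F B = dist F C" "dist F C = dist F A" "dist F A = dist F B"
    using assms(5) by (auto simp: is_circumcenter_def)
  note side_midpoint = tangent_side_midpoint_focal[OF assms(2) tangents(1) focus equidistant(1)]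
  have H: "H = A + B + C - 2 *\<^sub>R F"
    using orthocenter_unique[OF assms(1,6) is_orthocenter_circumcenter[OF assms(5)]] .
  have Z: "2 *\<^sub>R Z = A + B + C - F" and a: "a = dist F A / 2"
    using equidistant_midpoints_nine_point_center[OF assms(1,5) side_midpoint(1)
        tangent_side_midpoint_focal(1)[OF assms(2) tangents(2) focus equidistant(2)]
        tangent_side_midpoint_focal(1)[OF assms(2) tangents(3) focus equidistant(3)]]
    by auto
  have "2 *\<^sub>R Z - F = H"
    unfolding Z H by (simp add: scaleR_2)
  then have "\<bar>(F - midpoint B C) \<bullet> (H - midpoint B C)\<bar> = b\<^sup>2"
    using side_midpoint(2) by simp
  then show ?thesis
    using orthocenter_dists_product[OF assms(5)] unfolding H[symmetric] a by simp
qed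

end
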